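(* Let $n\ge 1$. Suppose $\eta_{t+1}\le\eta_t$ for all $t=1,\ldots,n-1$, suppose the base algorithm $\mathcal{A}$ satisfies the regret bound $(\ast)$, and suppose the transition path $T_n\in\mathcal{T}_n$ is covered by a transition path $\widehat{T}_n=(\hat t_1,\ldots,\hat t_{C(\widehat{T}_n)};n)\in\mathcal{T}_n$ with $w_n(\widehat{T}_n)>0$ (with $\hat t_0=1$, $\hat t_{C(\widehat T_n)+1}=n+1$). (a) If $\ell$ is convex in its first argument and takes values in $[0,1]$, then for every meta expert $(T_n,a)$ the forecaster of Algorithm 1 satisfies \[ \widehat L_n - L_n(T_n,a)\le \sum_{c=0}^{C(\widehat T_n)}\rho_{\mathcal E}(\hat t_{c+1}-\hat t_c)+\sum_{t=1}^n\frac{\eta_t}{8}+\frac{1}{\eta_n}\ln\frac{1}{w_n(\widehat T_n)} \le (C(\widehat T_n)+1)\,\rho_{\mathcal E}\!\left(\frac{n}{C(\widehat T_n)+1}\right)+\sum_{t=1}^n\frac{\eta_t}{8}+\frac{1}{\eta_n}\ln\frac{1}{w_n(\widehat T_n)}. \] (b) If $\ell$ is exp-concave for the value $\eta>0$ and Algorithm 1 is used with $\eta_t=\eta$ for all $t$, then for every meta expert $(T_n,a)$ \[ \widehat L_n - L_n(T_n,a)\le \sum_{c=0}^{C(\widehat T_n)}\rho_{\mathcal E}(\hat t_{c+1}-\hat t_c)+\frac{1}{\eta}\ln\frac{1}{w_n(\widehat T_n)} \le (C(\widehat T_n)+1)\,\rho_{\mathcal E}\!\left(\frac{n}{C(\widehat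 T_n)+1}\right)+\frac{1}{\eta}\ln\frac{1}{w_n(\widehat T_n)}. \]
   Context: Online prediction setting: $\mathcal D$ is a convex subset of a vector space, $\mathcal Y$ a set, and $\ell:\mathcal D\times\mathcal Y\to\mathbb R$ a loss function convex in its first argument. $\mathcal E$ is a set of base experts. In each round $t=1,2,\ldots$ the environment chooses an outcome $y_t\in\mathcal Y$ and advice $f_{i,t}\in\mathcal D$ for each $i\in\mathcal E$; the advice is revealed, the forecaster outputs $\widehat p_t\in\mathcal D$, then $y_t$ is revealed. $\widehat L_n=\sum_{t=1}^n\ell(\widehat p_t,y_t)$, and for $1\le t_1\le t_2$, $L_i(t_1,t_2)=\sum_{t=t_1}^{t_2-1}\ell(f_{i,t},y_t)$. The loss is exp-concave for $\eta>0$ if $p\mapsto e^{-\eta\ell(p,y)}$ is concave for every fixed $y$. Base algorithm: $\mathcal A$ is a forecasting algorithm in this protocol satisfying the regret bound $(\ast)$: for every $n$ and every sequence of outcomes and advice, the cumulative loss of $\mathcal A$ over $n$ rounds minus $\min_{i\in\mathcal E}$ of the cumulative loss of expert $i$ is at most $\rho_{\mathcal E}(n)$, where $\rho_{\mathcal E}:[0,\infty)\to[0,\infty)$ is nondecreasing, concave and $\rho_{\mathcal E}(0)=0$. For $t_1<t_2$, $L_{\mathcal A}(t_1,t_2)$ denotes the loss of a fresh instance of $\mathcal A$ started at time $t_1$ and run on rounds $t_1,\ldots,t_2-1$. Transition paths: $\mathcal T_t$ is the set of vectors $T=(t_1,\ldots,t_C;t)$ with $C\ge 0$ and $1<t_1<\cdots<t_C\le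 t$; $C(T)=C$ is the number of switches, and $t_0:=1$, $t_{C+1}:=t+1$. A meta expert $(T,a)$ with $T\in\mathcal T_n$ and $a=(i_0,\ldots,i_C)\in\mathcal E^{C+1}$ follows expert $i_c$ on $[t_c,t_{c+1})$; its loss is $L_n(T,a)=\sum_{c=0}^C L_{i_c}(t_c,t_{c+1})$. For $t\le n$ the truncation of $T\in\mathcal T_n$ is $T_t=(t_1,\ldots,t_k;t)$ where $t_k\le t<t_{k+1}$, and $\tau_t(T)=t_k$. $\widehat T$ covers $T$ if every switch point of $T$ is a switch point of $\widehat T$. The algorithm $(\mathcal A,T)$ runs $\mathcal A$ restarting it at each $t_c$; its prediction at time $t$ is $f_{\mathcal A,t}(\tau_t(T))$, the output at time $t$ of an instance of $\mathcal A$ started at time $\tau_t(T)$; $L_t(\mathcal A,T)$ denotes its cumulative loss through time $t$, with $L_0(\mathcal A,T_0)=0$ for the empty path $T_0$. Weight functions: $w_t:\mathcal T_t\to[0,1]$ is a probability distribution on $\mathcal T_t$ for each $t$, and the family is consistent: $w_t(T_t)=\sum_{T'\in\mathcal T_{t+1}:T'_t=T_t}w_{t+1}(T')$; $w_0(T_0)=1$. Algorithm 1 (inputs $\mathcal A$, $\{w_t\}$, learning parameters $\eta_t>0$): for $t=1,\ldots,n$ predict $\widehat p_t=\dfrac{\sum_{T\in\mathcal T_t}w_t(T)e^{-\eta_tL_{t-1}(\mathcal A,T_{t-1})}f_{\mathcal A,t}(\tau_t(T))}{\sum_{T\in\mathcal T_t}w_t(T)e^{-\eta_tL_{t-1}(\mathcal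 A,T_{t-1})}}$. *)

theory Defs
  imports "HOL-Analysis.Analysis"
begin

text \<open>Transition paths T = (t_1,...,t_C; t) are represented by the strictly increasing
  list [t_1,...,t_C] of switch points; the horizon t is passed separately.\<close>

definition paths :: "nat \<Rightarrow> nat list set" where
  "paths t = {T. sorted_wrt (<) T \<and> set T \<subseteq> {2..t}}"

definition trunc :: "nat list \<Rightarrow> nat \<Rightarrow> nat list" where
  "trunc T t = filter (\<lambda>s. s \<le> t) T"

definition tau :: "nat list \<Rightarrow> nat \<Rightarrow> nat" where
  "tau T t = last (1 # trunc T t)"

definition bnd :: "nat list \<Rightarrow> nat \<Rightarrow> nat \<Rightarrow> nat" where
  "bnd T t c = (if c = 0 then 1 else if c \<le> length T then T ! (c - 1) else t + 1)"

definition covers :: "nat list \<Rightarrow> nat list \<Rightarrow> bool" where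
  "covers Th T \<longleftrightarrow> set T \<subseteq> set Th"

text \<open>A forecasting algorithm is a map from the history (past outcomes y_r..y_{t-1}
  and advice vectors f_r..f_t) to a prediction. fA A y f r t is the output at time t of
  an instance of A started at time r.\<close>
definition fA :: "('y list \<Rightarrow> ('e \<Rightarrow> 'd) list \<Rightarrow> 'd) \<Rightarrow> (nat \<Rightarrow> 'y) \<Rightarrow> (nat \<Rightarrow> 'e \<Rightarrow> 'd)
    \<Rightarrow> nat \<Rightarrow> nat \<Rightarrow> 'd" where
  "fA A y f r t = A (map y [r..<t]) (map f [r..<Suc t])"

definition regret_bound :: "'d set \<Rightarrow> ('d \<Rightarrow> 'y \<Rightarrow> real)
    \<Rightarrow> ('y list \<Rightarrow> ('e::finite \<Rightarrow> 'd) list \<Rightarrow> 'd) \<Rightarrow> (real \<Rightarrow> real) \<Rightarrow> bool" where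
  "regret_bound D loss A \<rho> \<longleftrightarrow>
     (\<forall>n ys (fs :: nat \<Rightarrow> 'e \<Rightarrow> 'd). (\<forall>t\<ge>1. \<forall>i. fs t i \<in> D) \<longrightarrow>
        (\<Sum>t=1..n. loss (fA A ys fs 1 t) (ys t)) - (MIN i. \<Sum>t=1..n. loss (fs t i) (ys t))
          \<le> \<rho> (real n))"

definition valid_algorithm :: "'d set \<Rightarrow> ('y list \<Rightarrow> ('e \<Rightarrow> 'd) list \<Rightarrow> 'd) \<Rightarrow> bool" where
  "valid_algorithm D A \<longleftrightarrow>
     (\<forall>ys fs. length fs = Suc (length ys) \<and> (\<forall>g\<in>set fs. \<forall>i. g i \<in> D) \<longrightarrow> A ys fs \<in> D)"

definition weights_ok :: "(nat \<Rightarrow> nat list \<Rightarrow> real) \<Rightarrow> bool" where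
  "weights_ok w \<longleftrightarrow> w 0 [] = 1 \<and>
     (\<forall>t. (\<forall>T\<in>paths t. 0 \<le> w t T \<and> w t T \<le> 1) \<and> (\<Sum>T\<in>paths t. w t T) = 1 \<and>
          (\<forall>T\<in>paths t. w t T = (\<Sum>T'\<in>{T' \<in> paths (Suc t). trunc T' t = T}. w (Suc t) T')))"

definition LA :: "('d \<Rightarrow> 'y \<Rightarrow> real) \<Rightarrow> ('y list \<Rightarrow> ('e \<Rightarrow> 'd) list \<Rightarrow> 'd) \<Rightarrow> (nat \<Rightarrow> 'y)
    \<Rightarrow> (nat \<Rightarrow> 'e \<Rightarrow> 'd) \<Rightarrow> nat \<Rightarrow> nat list \<Rightarrow> real" where
  "LA loss A y f t T = (\<Sum>s=1..t. loss (fA A y f (tau T s) s) (y s))"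

definition alg1 :: "('d::real_vector \<Rightarrow> 'y \<Rightarrow> real) \<Rightarrow> ('y list \<Rightarrow> ('e \<Rightarrow> 'd) list \<Rightarrow> 'd)
    \<Rightarrow> (nat \<Rightarrow> nat list \<Rightarrow> real) \<Rightarrow> (nat \<Rightarrow> real) \<Rightarrow> (nat \<Rightarrow> 'y) \<Rightarrow> (nat \<Rightarrow> 'e \<Rightarrow> 'd)
    \<Rightarrow> nat \<Rightarrow> 'd" where
  "alg1 loss A w \<eta> y f t =
     (1 / (\<Sum>T\<in>paths t. w t T * exp (- \<eta> t * LA loss A y f (t - 1) (trunc T (t - 1)))))
     *\<^sub>R (\<Sum>T\<in>paths t. (w t T * exp (- \<eta> t * LA loss A y f (t - 1) (trunc T (t - 1))))
            *\<^sub>R fA A y f (tau T t) t)"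

definition Lhat :: "('d::real_vector \<Rightarrow> 'y \<Rightarrow> real) \<Rightarrow> ('y list \<Rightarrow> ('e \<Rightarrow> 'd) list \<Rightarrow> 'd)
    \<Rightarrow> (nat \<Rightarrow> nat list \<Rightarrow> real) \<Rightarrow> (nat \<Rightarrow> real) \<Rightarrow> (nat \<Rightarrow> 'y) \<Rightarrow> (nat \<Rightarrow> 'e \<Rightarrow> 'd)
    \<Rightarrow> nat \<Rightarrow> real" where
  "Lhat loss A w \<eta> y f n = (\<Sum>t=1..n. loss (alg1 loss A w \<eta> y f t) (y t))"

definition meta_loss :: "('d \<Rightarrow> 'y \<Rightarrow> real) \<Rightarrow> (nat \<Rightarrow> 'y) \<Rightarrow> (nat \<Rightarrow> 'e \<Rightarrow> 'd)
    \<Rightarrow> nat \<Rightarrow> nat list \<Rightarrow> 'e list \<Rightarrow> real" where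
  "meta_loss loss y f n T a =
     (\<Sum>c=0..length T. \<Sum>s\<in>{bnd T n c..<bnd T n (Suc c)}. loss (f s (a ! c)) (y s))"

definition exp_concave :: "'d::real_vector set \<Rightarrow> ('d \<Rightarrow> 'y \<Rightarrow> real) \<Rightarrow> real \<Rightarrow> bool" where
  "exp_concave D loss \<eta> \<longleftrightarrow> (\<forall>y. concave_on D (\<lambda>p. exp (- \<eta> * loss p y)))"

end

theory Submission
  imports Defs "HOL-Probability.Hoeffding"
begin

text \<open>
  Write the regret against the meta expert (T, a) as (Lhat_n - L_n(A, Th)) + (L_n(A, Th) - L_n(T, a)),
  where L_n(A, Th) is the loss of the base algorithm restarted at the switch points of Th.
  Since Th covers T, the meta expert follows a single base expert on every segment of Th, so the
  regret bound of A on each segment bounds the second difference by the sum of rho over the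
  segment lengths; concavity of rho (Jensen) turns this into (C + 1) rho (n / (C + 1)).
  The first difference is the regret of exponential weights over the paths, treated as experts
  predicting with restarted copies of A. With Wpre_t and Wpost_t the normalisers before and after the
  loss at time t is seen, each step costs at most (ln Wpre_t - ln Wpost_t) / eta_t, plus eta_t / 8
  by Hoeffding's lemma for bounded convex losses, and nothing more for exp-concave losses.
  Consistency of the weights and the power-mean inequality for eta_{t+1} <= eta_t give
  ln Wpre_{t+1} / eta_{t+1} <= ln Wpost_t / eta_t, so the sum telescopes to -ln Wpost_n / eta_n, which is at
  most L_n(A, Th) + ln (1 / w_n(Th)) / eta_n.
\<close>

section \<open>Paths and their segments\<close>

lemma finite_paths: "finite (paths t)"
proof -
  have "paths t \<subseteq> {xs. set xs \<subseteq> {2..t} \<and> length xs \<le> t}"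
  proof
    fix xs assume "xs \<in> paths t"
    hence d: "distinct xs" and s: "set xs \<subseteq> {2..t}"
      by (auto simp: paths_def sorted_wrt_iff_nth_less distinct_conv_nth)
        (metis less_irrefl not_less_iff_gr_or_eq)
    have "length xs = card (set xs)" using d by (simp add: distinct_card)
    also have "\<dots> \<le> card {2..t}" using s by (intro card_mono) auto
    finally show "xs \<in> {xs. set xs \<subseteq> {2..t} \<and> length xs \<le> t}" using s by auto
  qed
  moreover have "finite {xs. set xs \<subseteq> {2..t} \<and> length xs \<le> t}"
    by (rule finite_lists_length_le) auto
  ultimately show ?thesis by (rule finite_subset)
qed

lemma trunc_in_paths: "T \<in> paths (Suc t) \<Longrightarrow> trunc T t \<in> paths t"
  by (auto simp: paths_def trunc_def sorted_wrt_filter)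

lemma sorted_filter_le_eq_takeWhile:
  "sorted_wrt (<) P \<Longrightarrow> filter (\<lambda>x. x \<le> s) P = takeWhile (\<lambda>x. x \<le> (s::nat)) P"
proof (induction P)
  case (Cons a P)
  show ?case
  proof (cases "a \<le> s")
    case True with Cons show ?thesis by simp
  next
    case False
    with Cons.prems have "filter (\<lambda>x. x \<le> s) P = []" by (auto simp: filter_empty_conv)
    with False show ?thesis by simp
  qed
qed simp

lemma length_filter_le_eq_iff:
  assumes "sorted_wrt (<) P" "c \<le> length P"
  shows "length (filter (\<lambda>x. x \<le> (s::nat)) P) = c \<longleftrightarrow>
           (c = 0 \<or> P ! (c - 1) \<le> s) \<and> (c = length P \<or> s < P ! c)"
  using assms
proof (induction P arbitrary: c)
  case Nil thus ?case by simp
next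
  case (Cons x P)
  have gt: "\<forall>z\<in>set P. x < z" using Cons.prems(1) by simp
  show ?case
  proof (cases "x \<le> s")
    case False
    hence empty: "filter (\<lambda>x. x \<le> s) (x # P) = []" using gt by (auto simp: filter_empty_conv)
    show ?thesis
    proof (cases c)
      case (Suc c')
      have "(x # P) ! c' \<ge> x"
      proof (cases c')
        case (Suc c'') hence "P ! c'' \<in> set P" using Cons.prems(2) \<open>c = Suc c'\<close> by simp
        thus ?thesis using gt Suc by fastforce
      qed simp
      thus ?thesis using empty False Suc by simp
    qed (use empty False in simp)
  next
    case True
    show ?thesis
    proof (cases c)
      case (Suc c')
      have "(c = 0 \<or> (x # P) ! (c - 1) \<le> s) \<longleftrightarrow> (c' = 0 \<or> P ! (c' - 1) \<le> s)"
        using Suc True by (cases c') auto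
      thus ?thesis using Cons.IH[of c'] Cons.prems Suc True by simp
    qed (use True in simp)
  qed
qed

definition seg_index :: "nat list \<Rightarrow> nat \<Rightarrow> nat" where
  "seg_index P s = length (trunc P s)"

lemma seg_index_le: "seg_index P s \<le> length P"
  unfolding seg_index_def trunc_def by simp

lemma tau_eq_bnd_seg_index:
  assumes "sorted_wrt (<) P"
  shows "tau P s = bnd P n (seg_index P s)"
proof -
  let ?k = "seg_index P s"
  have take: "trunc P s = take ?k P"
    unfolding seg_index_def trunc_def using assms sorted_filter_le_eq_takeWhile takeWhile_eq_take
    by metis
  show ?thesis
  proof (cases "?k = 0")
    case True thus ?thesis using take by (simp add: tau_def bnd_def)
  next
    case False
    have "?k \<le> length P" by (rule seg_index_le)
    hence "last (take ?k P) = P ! (?k - 1)" using False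
      by (subst last_conv_nth) (auto simp: min_def)
    moreover have "trunc P s \<noteq> []" using False unfolding seg_index_def by auto
    ultimately show ?thesis using False take \<open>?k \<le> length P\<close> by (simp add: tau_def bnd_def)
  qed
qed

lemma nth_path_range: "\<lbrakk>P \<in> paths n; j < length P\<rbrakk> \<Longrightarrow> P ! j \<in> {2..n}"
  using nth_mem by (fastforce simp: paths_def)

lemma bnd_ge_1:
  assumes "P \<in> paths n" "c \<le> length P"
  shows "1 \<le> bnd P n c"
  using assms nth_path_range[OF assms(1), of "c - 1"] by (cases c) (auto simp: bnd_def)

lemma seg_index_preimage:
  assumes P: "P \<in> paths n" and c: "c \<le> length P"
  shows "{s\<in>{1..n}. seg_index P s = c} = {bnd P n c..<bnd P n (Suc c)}"
proof -
  have sorted: "sorted_wrt (<) P" using P by (simp add: paths_def)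
  note range = nth_path_range[OF P]
  have iff: "seg_index P s = c \<longleftrightarrow> (c = 0 \<or> P ! (c - 1) \<le> s) \<and> (c = length P \<or> s < P ! c)" for s
    unfolding seg_index_def trunc_def using length_filter_le_eq_iff[OF sorted c] by blast
  show ?thesis
  proof (intro set_eqI iffI)
    fix s assume "s \<in> {s\<in>{1..n}. seg_index P s = c}"
    thus "s \<in> {bnd P n c..<bnd P n (Suc c)}" using iff[of s] c by (auto simp: bnd_def)
  next
    fix s assume s: "s \<in> {bnd P n c..<bnd P n (Suc c)}"
    have "1 \<le> s" using s bnd_ge_1[OF P c] by simp
    moreover have "s \<le> n"
      using s c range[of c] by (cases "c < length P") (auto simp: bnd_def)
    moreover have "seg_index P s = c" using iff[of s] s c by (auto simp: bnd_def split: if_splits)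
    ultimately show "s \<in> {s\<in>{1..n}. seg_index P s = c}" by auto
  qed
qed

lemma in_segment_seg_index:
  "\<lbrakk>P \<in> paths n; c \<le> length P; s \<in> {bnd P n c..<bnd P n (Suc c)}\<rbrakk> \<Longrightarrow> seg_index P s = c"
  using seg_index_preimage by blast

lemma bnd_le_bnd_Suc:
  assumes P: "P \<in> paths n" and c: "c \<le> length P"
  shows "bnd P n c \<le> bnd P n (Suc c)"
proof -
  have sorted: "sorted_wrt (<) P" using P by (simp add: paths_def)
  note range = nth_path_range[OF P]
  show ?thesis
  proof (cases "c < length P")
    case True
    show ?thesis
    proof (cases c)
      case 0 thus ?thesis using True range[of 0] by (auto simp: bnd_def)
    next
      case (Suc c')
      have "P ! c' < P ! c" using sorted True Suc by (simp add: sorted_wrt_iff_nth_less)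
      thus ?thesis using True Suc by (simp add: bnd_def)
    qed
  next
    case False
    hence "c = length P" using c by simp
    thus ?thesis using range[of "c - 1"] by (cases c) (auto simp: bnd_def)
  qed
qed

lemma sum_split_segments:
  assumes "P \<in> paths n"
  shows "(\<Sum>s=1..n. g s) = (\<Sum>c=0..length P. \<Sum>s\<in>{bnd P n c..<bnd P n (Suc c)}. g s)"
proof -
  have "(\<Sum>s=1..n. g s) = (\<Sum>c=0..length P. \<Sum>s\<in>{s\<in>{1..n}. seg_index P s = c}. g s)"
    by (rule sum.group[symmetric]) (auto simp: seg_index_le)
  thus ?thesis using seg_index_preimage[OF assms] by simp
qed

lemma sum_segment_lengths:
  "P \<in> paths n \<Longrightarrow> (\<Sum>c=0..length P. real (bnd P n (Suc c) - bnd P n c)) = real n"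
  using sum_split_segments[of P n "\<lambda>_. 1 :: real"] by simp

lemma tau_switch_point:
  assumes "sorted_wrt (<) P" "x \<in> set P"
  shows "tau P x = x"
proof -
  obtain u v where P: "P = u @ x # v" using assms(2) split_list by metis
  have "\<forall>z\<in>set u. z < x" "\<forall>z\<in>set v. x < z" using assms(1) P by (auto simp: sorted_wrt_append)
  hence "filter (\<lambda>z. z \<le> x) P = filter (\<lambda>z. z \<le> x) u @ [x]" using P
    by (auto simp: filter_empty_conv)
  thus ?thesis by (simp add: tau_def trunc_def)
qed

text \<open>No switch point of T lies strictly inside a segment of a path covering it.\<close>
lemma trunc_eq_on_covering_segment:
  assumes Th: "Th \<in> paths n" and cov: "set T \<subseteq> set Th" and c: "c \<le> length Th"
    and s: "s \<in> {bnd Th n c..<bnd Th n (Suc c)}"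
  shows "trunc T s = trunc T (bnd Th n c)"
  unfolding trunc_def
proof (rule filter_cong[OF refl])
  fix x assume x: "x \<in> set T"
  have sorted: "sorted_wrt (<) Th" using Th by (auto simp: paths_def)
  show "x \<le> s \<longleftrightarrow> x \<le> bnd Th n c"
  proof
    assume "x \<le> s"
    show "x \<le> bnd Th n c"
    proof (rule ccontr)
      assume "\<not> x \<le> bnd Th n c"
      hence "seg_index Th x = c" using \<open>x \<le> s\<close> s by (intro in_segment_seg_index[OF Th c]) auto
      hence "tau Th x = bnd Th n c" using tau_eq_bnd_seg_index[OF sorted, of x n] by simp
      moreover have "tau Th x = x" using tau_switch_point[OF sorted] x cov by auto
      ultimately show False using \<open>\<not> x \<le> bnd Th n c\<close> by simp
    qed
  qed (use s in auto)
qed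

lemma meta_loss_eq_sum_seg_index:
  assumes T: "T \<in> paths n"
  shows "meta_loss loss y f n T a = (\<Sum>s=1..n. loss (f s (a ! seg_index T s)) (y s))"
  unfolding sum_split_segments[OF T] meta_loss_def
  by (intro sum.cong refl) (simp add: in_segment_seg_index[OF T])

section \<open>The base algorithm restarted along a path\<close>

lemma fA_in_domain:
  assumes "valid_algorithm D A" "\<forall>t\<ge>1. \<forall>i. f t i \<in> D" "1 \<le> r" "r \<le> t"
  shows "fA A y f r t \<in> D"
  unfolding fA_def
proof (rule assms(1)[unfolded valid_algorithm_def, rule_format], intro conjI ballI allI)
  show "length (map f [r..<Suc t]) = Suc (length (map y [r..<t]))" using assms(4) by simp
next
  fix g i assume "g \<in> set (map f [r..<Suc t])"
  then obtain k where "k \<ge> r" "g = f k" by auto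
  thus "g i \<in> D" using assms(2,3) by auto
qed

lemma tau_bounds:
  assumes "T \<in> paths n" "1 \<le> t"
  shows "1 \<le> tau T t \<and> tau T t \<le> t"
proof -
  have "tau T t \<in> set (1 # trunc T t)" unfolding tau_def by (rule last_in_set) simp
  thus ?thesis using assms by (auto simp: trunc_def paths_def)
qed

lemma map_upt_shift: "map (\<lambda>k. g (k + d)) [a..<b] = map g [a + d..<b + d]"
  by (rule nth_equalityI) (auto simp: add.commute add.left_commute)

lemma regret_bound_shifted:
  fixes loss :: "'d \<Rightarrow> 'y \<Rightarrow> real" and A :: "'y list \<Rightarrow> ('e::finite \<Rightarrow> 'd) list \<Rightarrow> 'd"
  assumes reg: "regret_bound D loss A \<rho>" and adv: "\<forall>t\<ge>1. \<forall>i. f t i \<in> D" and r: "1 \<le> r"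
  shows "(\<Sum>s\<in>{r..<r+m}. loss (fA A y f r s) (y s)) - (\<Sum>s\<in>{r..<r+m}. loss (f s i) (y s))
           \<le> \<rho> (real m)"
proof -
  define d where "d = r - 1"
  define ys where "ys = (\<lambda>k. y (k + d))"
  define fs where "fs = (\<lambda>k. f (k + d))"
  have "\<forall>t\<ge>1. \<forall>i. fs t i \<in> D" using adv by (auto simp: fs_def)
  hence R: "(\<Sum>t=1..m. loss (fA A ys fs 1 t) (ys t)) - (MIN i. \<Sum>t=1..m. loss (fs t i) (ys t))
              \<le> \<rho> (real m)"
    using reg unfolding regret_bound_def by blast
  have "(MIN i. \<Sum>t=1..m. loss (fs t i) (ys t)) \<le> (\<Sum>t=1..m. loss (fs t i) (ys t))"
    by (rule Min_le) auto
  moreover have fA_shift: "fA A ys fs 1 t = fA A y f r (t + d)" for t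
    unfolding fA_def ys_def fs_def map_upt_shift[of y d] map_upt_shift[of f d]
    using r by (simp add: d_def)
  have reindex: "(\<Sum>t=1..m. g (t + d)) = (\<Sum>s\<in>{r..<r+m}. g s)" for g :: "nat \<Rightarrow> real"
  proof -
    have "{1+d..m+d} = {r..<r+m}" using r by (auto simp: d_def)
    thus ?thesis by (simp flip: sum.shift_bounds_cl_nat_ivl)
  qed
  have "(\<Sum>t=1..m. loss (fA A ys fs 1 t) (ys t)) = (\<Sum>s\<in>{r..<r+m}. loss (fA A y f r s) (y s))"
    using reindex[of "\<lambda>s. loss (fA A y f r s) (y s)"] by (simp only: fA_shift) (simp add: ys_def)
  moreover have "(\<Sum>t=1..m. loss (fs t i) (ys t)) = (\<Sum>s\<in>{r..<r+m}. loss (f s i) (y s))"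
    using reindex[of "\<lambda>s. loss (f s i) (y s)"] by (simp add: fs_def ys_def)
  ultimately show ?thesis using R by linarith
qed

lemma regret_bound_segment:
  fixes loss :: "'d \<Rightarrow> 'y \<Rightarrow> real" and A :: "'y list \<Rightarrow> ('e::finite \<Rightarrow> 'd) list \<Rightarrow> 'd"
  assumes "regret_bound D loss A \<rho>" "\<forall>t\<ge>1. \<forall>i. f t i \<in> D" "P \<in> paths n" "c \<le> length P"
  shows "(\<Sum>s\<in>{bnd P n c..<bnd P n (Suc c)}. loss (fA A y f (bnd P n c) s) (y s))
           \<le> (\<Sum>s\<in>{bnd P n c..<bnd P n (Suc c)}. loss (f s i) (y s))
              + \<rho> (real (bnd P n (Suc c) - bnd P n c))"
proof -
  have "bnd P n (Suc c) = bnd P n c + (bnd P n (Suc c) - bnd P n c)"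
    using bnd_le_bnd_Suc[OF assms(3,4)] by simp
  thus ?thesis
    using regret_bound_shifted[OF assms(1,2) bnd_ge_1[OF assms(3,4)],
        where m = "bnd P n (Suc c) - bnd P n c" and y = y and i = i]
    by (subst (1 2) \<open>bnd P n (Suc c) = _\<close>) simp
qed

lemma LA_le_meta_loss:
  fixes loss :: "'d \<Rightarrow> 'y \<Rightarrow> real" and A :: "'y list \<Rightarrow> ('e::finite \<Rightarrow> 'd) list \<Rightarrow> 'd"
  assumes reg: "regret_bound D loss A \<rho>" and adv: "\<forall>t\<ge>1. \<forall>i. f t i \<in> D"
    and T: "T \<in> paths n" and Th: "Th \<in> paths n" and cov: "set T \<subseteq> set Th"
  shows "LA loss A y f n Th \<le> meta_loss loss y f n T a
           + (\<Sum>c=0..length Th. \<rho> (real (bnd Th n (Suc c) - bnd Th n c)))"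
proof -
  let ?seg = "\<lambda>c. {bnd Th n c..<bnd Th n (Suc c)}"
  let ?i = "\<lambda>c. a ! seg_index T (bnd Th n c)"
  have sorted: "sorted_wrt (<) Th" using Th by (simp add: paths_def)
  have "LA loss A y f n Th = (\<Sum>c=0..length Th. \<Sum>s\<in>?seg c. loss (fA A y f (bnd Th n c) s) (y s))"
    unfolding LA_def sum_split_segments[OF Th]
  proof (intro sum.cong refl)
    fix c s assume "c \<in> {0..length Th}" "s \<in> ?seg c"
    hence "seg_index Th s = c" by (intro in_segment_seg_index[OF Th]) auto
    thus "loss (fA A y f (tau Th s) s) (y s) = loss (fA A y f (bnd Th n c) s) (y s)"
      using tau_eq_bnd_seg_index[OF sorted, of s n] by simp
  qed
  also have "\<dots> \<le> (\<Sum>c=0..length Th. (\<Sum>s\<in>?seg c. loss (f s (?i c)) (y s))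
                      + \<rho> (real (bnd Th n (Suc c) - bnd Th n c)))"
    by (intro sum_mono regret_bound_segment[OF reg adv Th]) simp
  moreover have "(\<Sum>c=0..length Th. \<Sum>s\<in>?seg c. loss (f s (?i c)) (y s)) = meta_loss loss y f n T a"
    unfolding meta_loss_eq_sum_seg_index[OF T] sum_split_segments[OF Th]
  proof (intro sum.cong refl)
    fix c s assume "c \<in> {0..length Th}" "s \<in> ?seg c"
    hence "trunc T s = trunc T (bnd Th n c)" by (intro trunc_eq_on_covering_segment[OF Th cov]) auto
    thus "loss (f s (?i c)) (y s) = loss (f s (a ! seg_index T s)) (y s)"
      by (simp add: seg_index_def)
  qed
  ultimately show ?thesis by (simp add: sum.distrib)
qed

section \<open>Inequalities for convex combinations\<close>

lemma convex_comb_pos: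
  fixes q z :: "'a \<Rightarrow> real"
  assumes "finite S" "\<forall>i\<in>S. 0 \<le> q i" "sum q S = 1" "\<forall>i\<in>S. 0 < z i"
  shows "0 < (\<Sum>i\<in>S. q i * z i)"
proof -
  obtain j where "j \<in> S" "0 < q j" using assms(2,3)
    by (metis less_eq_real_def sum.neutral zero_neq_one)
  hence "0 < q j * z j" using assms(4) by simp
  also have "\<dots> \<le> (\<Sum>i\<in>S. q i * z i)"
    using \<open>j \<in> S\<close> assms by (intro member_le_sum) (auto intro: less_imp_le)
  finally show ?thesis .
qed

text \<open>Hoeffding's lemma for a finitely supported distribution on [0, 1].\<close>
lemma ln_convex_comb_exp_le:
  fixes q x :: "'a \<Rightarrow> real"
  assumes S: "finite S" and q: "\<forall>i\<in>S. 0 \<le> q i" "sum q S = 1"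
    and x: "\<forall>i\<in>S. 0 \<le> x i \<and> x i \<le> 1" and h: "0 < h"
  shows "ln (\<Sum>i\<in>S. q i * exp (- h * x i)) \<le> - h * (\<Sum>i\<in>S. q i * x i) + h\<^sup>2 / 8"
proof -
  define p where "p = (\<Sum>i\<in>S. q i * x i)"
  have "0 \<le> p" unfolding p_def using q x by (auto intro!: sum_nonneg)
  have "p \<le> (\<Sum>i\<in>S. q i)" unfolding p_def using q x by (intro sum_mono) (simp add: mult_left_le)
  hence "p \<le> 1" using q by simp
  have chord: "exp (- h * x i) \<le> (1 - x i) + x i * exp (- h)" if "i \<in> S" for i
  proof -
    have "exp ((1 - x i) *\<^sub>R 0 + x i *\<^sub>R (- h)) \<le> (1 - x i) * exp 0 + x i * exp (- h)"
      using x that by (intro convex_onD[OF exp_convex]) auto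
    thus ?thesis by (simp add: mult.commute)
  qed
  have "(\<Sum>i\<in>S. q i * exp (- h * x i)) \<le> (\<Sum>i\<in>S. q i * ((1 - x i) + x i * exp (- h)))"
    using q chord by (auto intro!: sum_mono mult_left_mono)
  also have "\<dots> = (\<Sum>i\<in>S. q i - q i * x i + exp (- h) * (q i * x i))"
    by (rule sum.cong) (simp_all add: algebra_simps)
  also have "\<dots> = 1 - p + p * exp (- h)"
    using q by (simp add: p_def sum.distrib sum_subtractf sum_distrib_left[symmetric] mult.commute)
  also have "\<dots> = exp (- h) * (1 + (1 - p) * (exp h - 1))"
  proof -
    have "exp (- h) * exp h = 1" by (simp add: exp_minus field_simps)
    thus ?thesis by algebra
  qed
  finally have le: "(\<Sum>i\<in>S. q i * exp (- h * x i)) \<le> exp (- h) * (1 + (1 - p) * (exp h - 1))" .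
  have "0 < (\<Sum>i\<in>S. q i * exp (- h * x i))" using convex_comb_pos[OF S q] by simp
  moreover have "0 < 1 + (1 - p) * (exp h - 1)"
    using \<open>p \<le> 1\<close> h by (smt (verit) exp_ge_zero mult_nonneg_nonneg one_le_exp_iff)
  ultimately have "ln (\<Sum>i\<in>S. q i * exp (- h * x i)) \<le> - h + ln (1 + (1 - p) * (exp h - 1))"
    using le by (simp add: ln_mult flip: ln_le_cancel_iff)
  also have "\<dots> \<le> - h * p + h\<^sup>2 / 8"
    using Hoeffdings_lemma_aux[of h "1 - p"] h \<open>p \<le> 1\<close> by (simp add: algebra_simps)
  finally show ?thesis unfolding p_def .
qed

lemma convex_loss_of_convex_comb_le:
  fixes ell :: "'d::real_vector \<Rightarrow> real"
  assumes S: "finite S" and conv: "convex_on D ell" and q: "\<forall>i\<in>S. 0 \<le> q i" "sum q S = 1"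
    and x: "\<forall>i\<in>S. x i \<in> D" and bounded: "\<forall>p\<in>D. 0 \<le> ell p \<and> ell p \<le> 1" and h: "0 < h"
  shows "ell (\<Sum>i\<in>S. q i *\<^sub>R x i) \<le> - ln (\<Sum>i\<in>S. q i * exp (- h * ell (x i))) / h + h / 8"
proof -
  have "S \<noteq> {}" using q by auto
  have "ell (\<Sum>i\<in>S. q i *\<^sub>R x i) \<le> (\<Sum>i\<in>S. q i * ell (x i))"
    by (rule convex_on_sum[OF S \<open>S \<noteq> {}\<close> conv]) (use q x in auto)
  moreover have "\<forall>i\<in>S. 0 \<le> ell (x i) \<and> ell (x i) \<le> 1" using x bounded by auto
  from ln_convex_comb_exp_le[OF S q this h]
  have "h * (\<Sum>i\<in>S. q i * ell (x i)) \<le> - ln (\<Sum>i\<in>S. q i * exp (- h * ell (x i))) + h\<^sup>2 / 8"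
    by linarith
  ultimately have "h * ell (\<Sum>i\<in>S. q i *\<^sub>R x i) \<le> - ln (\<Sum>i\<in>S. q i * exp (- h * ell (x i))) + h\<^sup>2 / 8"
    using h by (meson less_imp_le mult_left_mono order_trans)
  thus ?thesis using h by (simp add: field_simps power2_eq_square)
qed

lemma exp_concave_loss_of_convex_comb_le:
  fixes ell :: "'d::real_vector \<Rightarrow> real"
  assumes S: "finite S" and conc: "concave_on D (\<lambda>p. exp (- h * ell p))"
    and q: "\<forall>i\<in>S. 0 \<le> q i" "sum q S = 1" and x: "\<forall>i\<in>S. x i \<in> D" and h: "0 < h"
  shows "ell (\<Sum>i\<in>S. q i *\<^sub>R x i) \<le> - ln (\<Sum>i\<in>S. q i * exp (- h * ell (x i))) / h"
proof -
  have "S \<noteq> {}" using q by auto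
  have "(\<Sum>i\<in>S. q i * exp (- h * ell (x i))) \<le> exp (- h * ell (\<Sum>i\<in>S. q i *\<^sub>R x i))"
    by (rule concave_on_sum[OF S \<open>S \<noteq> {}\<close> conc]) (use q x in auto)
  moreover have "0 < (\<Sum>i\<in>S. q i * exp (- h * ell (x i)))" using convex_comb_pos[OF S q] by simp
  ultimately have "ln (\<Sum>i\<in>S. q i * exp (- h * ell (x i))) \<le> - h * ell (\<Sum>i\<in>S. q i *\<^sub>R x i)"
    by (simp flip: ln_le_cancel_iff)
  thus ?thesis using h by (simp add: field_simps)
qed

lemma ln_power_mean_mono:
  fixes q z :: "'a \<Rightarrow> real"
  assumes S: "finite S" and q: "\<forall>i\<in>S. 0 \<le> q i" "sum q S = 1" and z: "\<forall>i\<in>S. 0 < z i"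
    and ab: "0 < a" "a \<le> b"
  shows "ln (\<Sum>i\<in>S. q i * z i) / a \<le> ln (\<Sum>i\<in>S. q i * z i powr (b / a)) / b"
proof -
  define W where "W = (\<Sum>i\<in>S. q i * z i)"
  define V where "V = (\<Sum>i\<in>S. q i * z i powr (b / a))"
  have "S \<noteq> {}" using q by auto
  have W: "0 < W" unfolding W_def by (rule convex_comb_pos[OF S q z])
  have "W powr (b / a) \<le> V"
    using convex_on_sum[OF S \<open>S \<noteq> {}\<close> powr_convex[of "b / a"], of q z] q z ab
    by (simp add: W_def V_def less_imp_le)
  hence "ln (W powr (b / a)) \<le> ln V" using W by (intro ln_mono) auto
  moreover have "ln (W powr (b / a)) = (b / a) * ln W" using W by (simp add: ln_powr)
  ultimately have "(b / a) * ln W \<le> ln V" by linarith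
  thus ?thesis using ab by (simp add: W_def V_def field_simps)
qed

lemma concave_sum_le_card_mult:
  fixes g :: "real \<Rightarrow> real"
  assumes conc: "concave_on {0..} g" and S: "finite S" "S \<noteq> {}" and x: "\<forall>c\<in>S. 0 \<le> x c"
  shows "(\<Sum>c\<in>S. g (x c)) \<le> real (card S) * g ((\<Sum>c\<in>S. x c) / real (card S))"
proof -
  define k where "k = real (card S)"
  have k: "0 < k" using S by (simp add: k_def card_gt_0_iff)
  have "(\<Sum>c\<in>S. (1 / k) * g (x c)) \<le> g (\<Sum>c\<in>S. (1 / k) *\<^sub>R x c)"
    by (rule concave_on_sum[OF S conc]) (use x k in \<open>auto simp: k_def\<close>)
  hence "(\<Sum>c\<in>S. g (x c)) / k \<le> g ((\<Sum>c\<in>S. x c) / k)"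
    by (simp add: sum_distrib_left[symmetric] sum_divide_distrib)
  thus ?thesis using k by (simp add: k_def field_simps)
qed

section \<open>Exponential weights over paths\<close>

lemma weights_ok_nonneg: "\<lbrakk>weights_ok w; T \<in> paths t\<rbrakk> \<Longrightarrow> 0 \<le> w t T"
  unfolding weights_ok_def by blast

lemma weights_ok_sum: "weights_ok w \<Longrightarrow> (\<Sum>T\<in>paths t. w t T) = 1"
  unfolding weights_ok_def by blast

lemma sum_weights_trunc:
  assumes "weights_ok w"
  shows "(\<Sum>T'\<in>paths (Suc t). w (Suc t) T' * h (trunc T' t)) = (\<Sum>T\<in>paths t. w t T * h T)"
proof -
  have "(\<Sum>T'\<in>paths (Suc t). w (Suc t) T' * h (trunc T' t))
      = (\<Sum>T\<in>paths t. \<Sum>T'\<in>{T'\<in>paths (Suc t). trunc T' t = T}. w (Suc t) T' * h (trunc T' t))"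
    by (rule sum.group[symmetric]) (auto simp: finite_paths trunc_in_paths)
  also have "\<dots> = (\<Sum>T\<in>paths t. (\<Sum>T'\<in>{T'\<in>paths (Suc t). trunc T' t = T}. w (Suc t) T') * h T)"
    by (auto simp: sum_distrib_right intro!: sum.cong)
  also have "\<dots> = (\<Sum>T\<in>paths t. w t T * h T)"
    using assms unfolding weights_ok_def by (auto intro!: sum.cong)
  finally show ?thesis .
qed

lemma LA_Suc:
  "LA loss A y f (Suc t) T
     = LA loss A y f t (trunc T t) + loss (fA A y f (tau T (Suc t)) (Suc t)) (y (Suc t))"
proof -
  have "tau (trunc T t) s = tau T s" if "s \<in> {1..t}" for s
  proof -
    have "filter (\<lambda>x. x \<le> s) (filter (\<lambda>x. x \<le> t) T) = filter (\<lambda>x. x \<le> s) T"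
      using that by (auto simp: filter_filter intro!: filter_cong)
    thus ?thesis by (simp add: tau_def trunc_def)
  qed
  thus ?thesis unfolding LA_def by (simp add: sum.cl_ivl_Suc)
qed

definition mix_weight :: "('d \<Rightarrow> 'y \<Rightarrow> real) \<Rightarrow> ('y list \<Rightarrow> ('e \<Rightarrow> 'd) list \<Rightarrow> 'd)
    \<Rightarrow> (nat \<Rightarrow> nat list \<Rightarrow> real) \<Rightarrow> (nat \<Rightarrow> real) \<Rightarrow> (nat \<Rightarrow> 'y) \<Rightarrow> (nat \<Rightarrow> 'e \<Rightarrow> 'd)
    \<Rightarrow> nat \<Rightarrow> nat list \<Rightarrow> real" where
  "mix_weight loss A w \<eta> y f t T = w t T * exp (- \<eta> t * LA loss A y f (t - 1) (trunc T (t - 1)))"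

definition Wpre :: "('d \<Rightarrow> 'y \<Rightarrow> real) \<Rightarrow> ('y list \<Rightarrow> ('e \<Rightarrow> 'd) list \<Rightarrow> 'd)
    \<Rightarrow> (nat \<Rightarrow> nat list \<Rightarrow> real) \<Rightarrow> (nat \<Rightarrow> real) \<Rightarrow> (nat \<Rightarrow> 'y) \<Rightarrow> (nat \<Rightarrow> 'e \<Rightarrow> 'd)
    \<Rightarrow> nat \<Rightarrow> real" where
  "Wpre loss A w \<eta> y f t = (\<Sum>T\<in>paths t. mix_weight loss A w \<eta> y f t T)"

definition Wpost :: "('d \<Rightarrow> 'y \<Rightarrow> real) \<Rightarrow> ('y list \<Rightarrow> ('e \<Rightarrow> 'd) list \<Rightarrow> 'd)
    \<Rightarrow> (nat \<Rightarrow> nat list \<Rightarrow> real) \<Rightarrow> (nat \<Rightarrow> real) \<Rightarrow> (nat \<Rightarrow> 'y) \<Rightarrow> (nat \<Rightarrow> 'e \<Rightarrow> 'd)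
    \<Rightarrow> nat \<Rightarrow> real" where
  "Wpost loss A w \<eta> y f t = (\<Sum>T\<in>paths t. w t T * exp (- \<eta> t * LA loss A y f t T))"

lemma Wpre_pos: "weights_ok w \<Longrightarrow> 0 < Wpre loss A w \<eta> y f t"
  unfolding Wpre_def mix_weight_def
  by (rule convex_comb_pos) (auto simp: finite_paths weights_ok_nonneg weights_ok_sum)

lemma Wpost_pos: "weights_ok w \<Longrightarrow> 0 < Wpost loss A w \<eta> y f t"
  unfolding Wpost_def
  by (rule convex_comb_pos) (auto simp: finite_paths weights_ok_nonneg weights_ok_sum)

lemma Wpre_1: "weights_ok w \<Longrightarrow> Wpre loss A w \<eta> y f 1 = 1"
  by (simp add: Wpre_def mix_weight_def LA_def weights_ok_sum)

lemma posterior_nonneg: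
  assumes "weights_ok w" "T \<in> paths t"
  shows "0 \<le> mix_weight loss A w \<eta> y f t T / Wpre loss A w \<eta> y f t"
proof (rule divide_nonneg_pos)
  show "0 \<le> mix_weight loss A w \<eta> y f t T" by (simp add: mix_weight_def weights_ok_nonneg[OF assms])
qed (rule Wpre_pos[OF assms(1)])

lemma sum_posterior:
  assumes "weights_ok w"
  shows "(\<Sum>T\<in>paths t. mix_weight loss A w \<eta> y f t T / Wpre loss A w \<eta> y f t) = 1"
  unfolding sum_divide_distrib[symmetric] Wpre_def[symmetric]
  using Wpre_pos[OF assms, of loss A \<eta> y f t] by simp

lemma alg1_eq_convex_comb:
  "alg1 loss A w \<eta> y f t
     = (\<Sum>T\<in>paths t. (mix_weight loss A w \<eta> y f t T / Wpre loss A w \<eta> y f t) *\<^sub>R fA A y f (tau T t) t)"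
  by (simp add: alg1_def Wpre_def mix_weight_def scaleR_sum_right)

lemma ln_convex_comb_exp_loss:
  assumes w: "weights_ok w" and t: "1 \<le> t"
  shows "ln (\<Sum>T\<in>paths t. (mix_weight loss A w \<eta> y f t T / Wpre loss A w \<eta> y f t)
               * exp (- \<eta> t * loss (fA A y f (tau T t) t) (y t)))
         = ln (Wpost loss A w \<eta> y f t) - ln (Wpre loss A w \<eta> y f t)"
proof -
  obtain t' where t': "t = Suc t'" using t by (cases t) auto
  have "mix_weight loss A w \<eta> y f t T * exp (- \<eta> t * loss (fA A y f (tau T t) t) (y t))
          = w t T * exp (- \<eta> t * LA loss A y f t T)" for T
    by (simp add: mix_weight_def t' LA_Suc mult.assoc distrib_left flip: exp_add)
  hence "(\<Sum>T\<in>paths t. (mix_weight loss A w \<eta> y f t T / Wpre loss A w \<eta> y f t)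
               * exp (- \<eta> t * loss (fA A y f (tau T t) t) (y t)))
         = Wpost loss A w \<eta> y f t / Wpre loss A w \<eta> y f t"
    by (simp add: Wpost_def sum_divide_distrib)
  thus ?thesis
    using Wpost_pos[OF w, of loss A \<eta> y f t] Wpre_pos[OF w, of loss A \<eta> y f t] by (simp add: ln_div)
qed

lemma fA_tau_in_domain:
  "\<lbrakk>valid_algorithm D A; \<forall>t\<ge>1. \<forall>i. f t i \<in> D; T \<in> paths t; 1 \<le> t\<rbrakk> \<Longrightarrow> fA A y f (tau T t) t \<in> D"
  using fA_in_domain tau_bounds by blast

lemma alg1_loss_le_bounded:
  assumes w: "weights_ok w" and conv: "\<forall>yy. convex_on D (\<lambda>p. loss p yy)"
    and alg: "valid_algorithm D A" and adv: "\<forall>t\<ge>1. \<forall>i. f t i \<in> D"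
    and bounded: "\<forall>p\<in>D. \<forall>yy. 0 \<le> loss p yy \<and> loss p yy \<le> 1" and eta: "0 < \<eta> t" and t: "1 \<le> t"
  shows "loss (alg1 loss A w \<eta> y f t) (y t)
           \<le> (ln (Wpre loss A w \<eta> y f t) - ln (Wpost loss A w \<eta> y f t)) / \<eta> t + \<eta> t / 8"
proof -
  have "loss (alg1 loss A w \<eta> y f t) (y t)
          \<le> - ln (\<Sum>T\<in>paths t. (mix_weight loss A w \<eta> y f t T / Wpre loss A w \<eta> y f t)
                 * exp (- \<eta> t * loss (fA A y f (tau T t) t) (y t))) / \<eta> t + \<eta> t / 8"
    unfolding alg1_eq_convex_comb
    by (rule convex_loss_of_convex_comb_le[OF finite_paths conv[rule_format]])
      (use w alg adv bounded eta t in \<open>auto simp: posterior_nonneg sum_posterior fA_tau_in_domain\<close>)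
  thus ?thesis unfolding ln_convex_comb_exp_loss[OF w t] by simp
qed

lemma alg1_loss_le_exp_concave:
  assumes w: "weights_ok w" and ec: "exp_concave D loss \<eta>0"
    and alg: "valid_algorithm D A" and adv: "\<forall>t\<ge>1. \<forall>i. f t i \<in> D"
    and eta: "0 < \<eta>0" "\<eta> t = \<eta>0" and t: "1 \<le> t"
  shows "loss (alg1 loss A w \<eta> y f t) (y t)
           \<le> (ln (Wpre loss A w \<eta> y f t) - ln (Wpost loss A w \<eta> y f t)) / \<eta> t"
proof -
  have "concave_on D (\<lambda>p. exp (- \<eta> t * loss p (y t)))" using ec eta by (simp add: exp_concave_def)
  hence "loss (alg1 loss A w \<eta> y f t) (y t)
          \<le> - ln (\<Sum>T\<in>paths t. (mix_weight loss A w \<eta> y f t T / Wpre loss A w \<eta> y f t)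
                 * exp (- \<eta> t * loss (fA A y f (tau T t) t) (y t))) / \<eta> t"
    unfolding alg1_eq_convex_comb
    by (rule exp_concave_loss_of_convex_comb_le[OF finite_paths])
      (use w alg adv eta t in \<open>auto simp: posterior_nonneg sum_posterior fA_tau_in_domain\<close>)
  thus ?thesis unfolding ln_convex_comb_exp_loss[OF w t] by simp
qed

lemma ln_Wpre_Suc_le:
  assumes w: "weights_ok w" and eta: "0 < \<eta> (Suc t)" "\<eta> (Suc t) \<le> \<eta> t"
  shows "ln (Wpre loss A w \<eta> y f (Suc t)) / \<eta> (Suc t) \<le> ln (Wpost loss A w \<eta> y f t) / \<eta> t"
proof -
  have "Wpre loss A w \<eta> y f (Suc t) = (\<Sum>T\<in>paths t. w t T * exp (- \<eta> (Suc t) * LA loss A y f t T))"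
    unfolding Wpre_def mix_weight_def
    using sum_weights_trunc[OF w, of t "\<lambda>T. exp (- \<eta> (Suc t) * LA loss A y f t T)"] by simp
  moreover have "Wpost loss A w \<eta> y f t
      = (\<Sum>T\<in>paths t. w t T * exp (- \<eta> (Suc t) * LA loss A y f t T) powr (\<eta> t / \<eta> (Suc t)))"
    unfolding Wpost_def using eta by (intro sum.cong refl) (simp add: powr_def)
  ultimately show ?thesis
    using ln_power_mean_mono[OF finite_paths, where q = "w t"] eta
    by (simp add: w weights_ok_nonneg weights_ok_sum)
qed

lemma sum_ln_Wpre_Wpost_le:
  assumes w: "weights_ok w" and eta: "\<forall>t. 0 < \<eta> t"
  shows "\<lbrakk>1 \<le> n; \<forall>t\<in>{1..n-1}. \<eta> (Suc t) \<le> \<eta> t\<rbrakk> \<Longrightarrow>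
           (\<Sum>t=1..n. (ln (Wpre loss A w \<eta> y f t) - ln (Wpost loss A w \<eta> y f t)) / \<eta> t)
             \<le> - ln (Wpost loss A w \<eta> y f n) / \<eta> n"
proof (induction n rule: nat_induct_at_least)
  case base
  show ?case using Wpre_1[OF w, of loss A \<eta> y f] by simp
next
  case (Suc n)
  have "ln (Wpre loss A w \<eta> y f (Suc n)) / \<eta> (Suc n) \<le> ln (Wpost loss A w \<eta> y f n) / \<eta> n"
    using Suc eta by (intro ln_Wpre_Suc_le[OF w]) auto
  moreover have "\<forall>t\<in>{1..n-1}. \<eta> (Suc t) \<le> \<eta> t" using Suc.prems by auto
  ultimately show ?case using Suc by (simp add: diff_divide_distrib)
qed

lemma neg_ln_Wpost_le:
  assumes w: "weights_ok w" and Th: "Th \<in> paths n" and wpos: "0 < w n Th" and eta: "0 < \<eta> n"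
  shows "- ln (Wpost loss A w \<eta> y f n) / \<eta> n \<le> LA loss A y f n Th + 1 / \<eta> n * ln (1 / w n Th)"
proof -
  let ?L = "LA loss A y f n Th"
  have "w n Th * exp (- \<eta> n * ?L) \<le> Wpost loss A w \<eta> y f n"
    unfolding Wpost_def using w Th
    by (intro member_le_sum) (auto simp: finite_paths weights_ok_nonneg)
  hence "ln (w n Th * exp (- \<eta> n * ?L)) \<le> ln (Wpost loss A w \<eta> y f n)"
    using wpos by (intro ln_mono) auto
  hence "- ln (Wpost loss A w \<eta> y f n) \<le> \<eta> n * ?L + ln (1 / w n Th)"
    using wpos by (simp add: ln_mult ln_div)
  thus ?thesis using eta by (simp add: field_simps)
qed

lemma Lhat_minus_meta_loss_le:
  fixes loss :: "'d::real_vector \<Rightarrow> 'y \<Rightarrow> real" and A :: "'y list \<Rightarrow> ('e::finite \<Rightarrow> 'd) list \<Rightarrow> 'd"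
  assumes w: "weights_ok w" and eta: "\<forall>t. 0 < \<eta> t" and mono: "\<forall>t\<in>{1..n-1}. \<eta> (Suc t) \<le> \<eta> t"
    and n: "1 \<le> n" and T: "T \<in> paths n" and Th: "Th \<in> paths n" and cov: "set T \<subseteq> set Th"
    and wpos: "0 < w n Th" and reg: "regret_bound D loss A \<rho>" and adv: "\<forall>t\<ge>1. \<forall>i. f t i \<in> D"
    and step: "\<forall>t\<in>{1..n}. loss (alg1 loss A w \<eta> y f t) (y t)
                 \<le> (ln (Wpre loss A w \<eta> y f t) - ln (Wpost loss A w \<eta> y f t)) / \<eta> t + \<beta> t"
  shows "Lhat loss A w \<eta> y f n - meta_loss loss y f n T a
           \<le> (\<Sum>c=0..length Th. \<rho> (real (bnd Th n (Suc c) - bnd Th n c)))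
              + (\<Sum>t=1..n. \<beta> t) + 1 / \<eta> n * ln (1 / w n Th)"
proof -
  have "Lhat loss A w \<eta> y f n
          \<le> (\<Sum>t=1..n. (ln (Wpre loss A w \<eta> y f t) - ln (Wpost loss A w \<eta> y f t)) / \<eta> t)
             + (\<Sum>t=1..n. \<beta> t)"
    unfolding Lhat_def sum.distrib[symmetric] using step by (intro sum_mono) auto
  also have "\<dots> \<le> - ln (Wpost loss A w \<eta> y f n) / \<eta> n + (\<Sum>t=1..n. \<beta> t)"
    using sum_ln_Wpre_Wpost_le[OF w eta n mono] by simp
  also have "\<dots> \<le> LA loss A y f n Th + 1 / \<eta> n * ln (1 / w n Th) + (\<Sum>t=1..n. \<beta> t)"
    using neg_ln_Wpost_le[OF w Th wpos eta[rule_format]] by simp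
  finally show ?thesis using LA_le_meta_loss[OF reg adv T Th cov, where a = a and y = y] by simp
qed

lemma sum_rho_segments_le:
  assumes "concave_on {0..} \<rho>" "Th \<in> paths n"
  shows "(\<Sum>c=0..length Th. \<rho> (real (bnd Th n (Suc c) - bnd Th n c)))
           \<le> real (length Th + 1) * \<rho> (real n / real (length Th + 1))"
  using concave_sum_le_card_mult[OF assms(1), of "{0..length Th}" "\<lambda>c. real (bnd Th n (Suc c) - bnd Th n c)"] sum_segment_lengths[OF assms(2)]
  by simp

theorem lemma1:
  fixes D :: "'d::real_vector set"
    and loss :: "'d \<Rightarrow> 'y \<Rightarrow> real"
    and A :: "'y list \<Rightarrow> ('e::finite \<Rightarrow> 'd) list \<Rightarrow> 'd"
    and \<rho> :: "real \<Rightarrow> real"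
    and w :: "nat \<Rightarrow> nat list \<Rightarrow> real"
    and \<eta> :: "nat \<Rightarrow> real"
    and y :: "nat \<Rightarrow> 'y"
    and f :: "nat \<Rightarrow> 'e \<Rightarrow> 'd"
    and n :: nat
    and T Th :: "nat list"
  assumes D: "convex D"
    and loss_convex: "\<forall>yy. convex_on D (\<lambda>p. loss p yy)"
    and rho: "mono_on {0..} \<rho>" "concave_on {0..} \<rho>" "\<rho> 0 = 0" "\<forall>x\<ge>0. \<rho> x \<ge> 0"
    and alg: "valid_algorithm D A" "regret_bound D loss A \<rho>"
    and weights: "weights_ok w"
    and eta_pos: "\<forall>t. \<eta> t > 0"
    and advice: "\<forall>t\<ge>1. \<forall>i. f t i \<in> D"
    and n: "n \<ge> 1"
    and eta_mono: "\<forall>t\<in>{1..n-1}. \<eta> (Suc t) \<le> \<eta> t"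
    and T: "T \<in> paths n" and Th: "Th \<in> paths n" and cov: "covers Th T"
    and wpos: "w n Th > 0"
  shows
    "((\<forall>p\<in>D. \<forall>yy. 0 \<le> loss p yy \<and> loss p yy \<le> 1) \<longrightarrow>
       (\<forall>a::'e list. length a = length T + 1 \<longrightarrow>
          Lhat loss A w \<eta> y f n - meta_loss loss y f n T a
            \<le> (\<Sum>c=0..length Th. \<rho> (real (bnd Th n (Suc c) - bnd Th n c)))
               + (\<Sum>t=1..n. \<eta> t / 8) + 1 / \<eta> n * ln (1 / w n Th)
          \<and> (\<Sum>c=0..length Th. \<rho> (real (bnd Th n (Suc c) - bnd Th n c)))
               + (\<Sum>t=1..n. \<eta> t / 8) + 1 / \<eta> n * ln (1 / w n Th)
            \<le> real (length Th + 1) * \<rho> (real n / real (length Th + 1))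
               + (\<Sum>t=1..n. \<eta> t / 8) + 1 / \<eta> n * ln (1 / w n Th)))
     \<and>
     (\<forall>\<eta>0. \<eta>0 > 0 \<and> exp_concave D loss \<eta>0 \<and> (\<forall>t. \<eta> t = \<eta>0) \<longrightarrow>
       (\<forall>a::'e list. length a = length T + 1 \<longrightarrow>
          Lhat loss A w \<eta> y f n - meta_loss loss y f n T a
            \<le> (\<Sum>c=0..length Th. \<rho> (real (bnd Th n (Suc c) - bnd Th n c)))
               + 1 / \<eta>0 * ln (1 / w n Th)
          \<and> (\<Sum>c=0..length Th. \<rho> (real (bnd Th n (Suc c) - bnd Th n c)))
               + 1 / \<eta>0 * ln (1 / w n Th)
            \<le> real (length Th + 1) * \<rho> (real n / real (length Th + 1))
               + 1 / \<eta>0 * ln (1 / w n Th)))"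
proof -
  have cov': "set T \<subseteq> set Th" using cov by (simp add: covers_def)
  note bound = Lhat_minus_meta_loss_le[OF weights eta_pos eta_mono n T Th cov' wpos alg(2) advice]
  note jensen = sum_rho_segments_le[OF rho(2) Th]
  have "Lhat loss A w \<eta> y f n - meta_loss loss y f n T a
          \<le> (\<Sum>c=0..length Th. \<rho> (real (bnd Th n (Suc c) - bnd Th n c)))
             + (\<Sum>t=1..n. \<eta> t / 8) + 1 / \<eta> n * ln (1 / w n Th)"
    if "\<forall>p\<in>D. \<forall>yy. 0 \<le> loss p yy \<and> loss p yy \<le> 1" for a
    using bound alg1_loss_le_bounded[OF weights loss_convex alg(1) advice that] eta_pos by auto
  moreover have "Lhat loss A w \<eta> y f n - meta_loss loss y f n T a
          \<le> (\<Sum>c=0..length Th. \<rho> (real (bnd Th n (Suc c) - bnd Th n c))) + 1 / \<eta>0 * ln (1 / w n Th)"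
    if "0 < \<eta>0" "exp_concave D loss \<eta>0" "\<forall>t. \<eta> t = \<eta>0" for \<eta>0 a
  proof -
    have "\<forall>t\<in>{1..n}. loss (alg1 loss A w \<eta> y f t) (y t)
            \<le> (ln (Wpre loss A w \<eta> y f t) - ln (Wpost loss A w \<eta> y f t)) / \<eta> t + 0"
      using alg1_loss_le_exp_concave[OF weights that(2) alg(1) advice that(1), where \<eta> = \<eta>] that(3)
      by simp
    from bound[OF this] show ?thesis using that(3)[rule_format, of n] by simp
  qed
  ultimately show ?thesis using jensen by auto
qed

end
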